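(* Let $m\in\mathbb N$ and let $t$ be a finite rooted ordered tree with $\dim(t)=2m$. Then there are trees $t',t_1,\dots,t_n$ with $\dim(t'),\dim(t_1),\dots,\dim(t_n)\le m$ such that $t=t'[t_1,\dots,t_n]$.
   Context: The dimension of a finite rooted ordered tree is defined inductively: (i) if $t$ has no children, $\dim(t)=0$; (ii) if $t$ has exactly one child $t_1$, $\dim(t)=\dim(t_1)$; (iii) if $t$ has at least two children, let $t_1,t_2$ be children of highest dimension, i.e. $\dim(t_1)\ge\dim(t_2)$ and $\dim(t_2)\ge\dim(t'')$ for every child $t''\ne t_1$; then $\dim(t)=\dim(t_1)+1$ if $\dim(t_1)=\dim(t_2)$, and $\dim(t)=\dim(t_1)$ if $\dim(t_1)>\dim(t_2)$. If $t'$ is a tree with leaves $l_1,\dots,l_n$ (from left to right) and $t_1,\dots,t_n$ are trees, $t'[t_1,\dots,t_n]$ denotes the tree obtained from $t'$ by replacing each leaf $l_i$ with $t_i$. *)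

theory Defs
  imports Main
begin

datatype tree = Node "tree list"

fun children :: "tree \<Rightarrow> tree list" where
  "children (Node ts) = ts"

fun dim :: "tree \<Rightarrow> nat" where
  "dim (Node ts) =
     (case rev (sort (map dim ts)) of
        [] \<Rightarrow> 0
      | [d] \<Rightarrow> d
      | d1 # d2 # _ \<Rightarrow> (if d1 = d2 then d1 + 1 else d1))"

fun nleaves :: "tree \<Rightarrow> nat" where
  "nleaves (Node []) = 1"
| "nleaves (Node (c # cs)) = sum_list (map nleaves (c # cs))"

text \<open>Grafting: replace the leaves of a tree from left to right by the trees in a list;
  returns the resulting tree and the unused rest of the list.\<close>
fun graft :: "tree \<Rightarrow> tree list \<Rightarrow> tree \<times> tree list"
and graft_list :: "tree list \<Rightarrow> tree list \<Rightarrow> tree list \<times> tree list" where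
  "graft (Node []) [] = (Node [], [])"
| "graft (Node []) (s # ss) = (s, ss)"
| "graft (Node (c # cs)) ss = (let (cs', ss') = graft_list (c # cs) ss in (Node cs', ss'))"
| "graft_list [] ss = ([], ss)"
| "graft_list (c # cs) ss =
     (let (c', ss1) = graft c ss; (cs', ss2) = graft_list cs ss1 in (c' # cs', ss2))"

text \<open>t'[t_1,...,t_n], meaningful when n equals the number of leaves of t'.\<close>
definition subst :: "tree \<Rightarrow> tree list \<Rightarrow> tree" where
  "subst t' ts = fst (graft t' ts)"

end

theory Submission
  imports Defs "HOL-Library.Multiset"
begin

text \<open>Cut \<open>t\<close> off at every maximal subtree of dimension at most \<open>m\<close>: these subtrees
  become the \<open>t\<^sub>i\<close> and what remains above them is \<open>t'\<close>. A node has dimension at most \<open>k\<close>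
  iff all children have dimension at most \<open>k\<close> and at most one of them has dimension
  exactly \<open>k\<close>; with this characterisation an induction shows that cutting lowers the
  dimension by \<open>m\<close>, so \<open>dim t' \<le> dim t - m = m\<close>.\<close>

lemma sorted_desc_dim_rule_le_iff:
  fixes S :: "nat list"
  assumes "sorted_wrt (\<ge>) S"
  shows "(case S of [] \<Rightarrow> 0 | [d] \<Rightarrow> d
           | d1 # d2 # _ \<Rightarrow> (if d1 = d2 then d1 + 1 else d1)) \<le> k
         \<longleftrightarrow> (\<forall>x\<in>set S. x \<le> k) \<and> length (filter ((=) k) S) \<le> 1"
proof (cases S rule: remdups_adj.cases)
  case (3 d1 d2 rest)
  have "d2 \<le> d1" and rest_le: "\<forall>x\<in>set rest. x \<le> d2"
    using assms 3 by auto
  then have "d2 < k \<Longrightarrow> filter ((=) k) rest = []"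
    by (auto simp: filter_empty_conv)
  with \<open>d2 \<le> d1\<close> rest_le show ?thesis
    using 3 by (cases "d2 < k") auto
qed auto

lemma dim_Node_le_iff:
  "dim (Node ts) \<le> k \<longleftrightarrow>
     (\<forall>c\<in>set ts. dim c \<le> k) \<and> length (filter (\<lambda>c. dim c = k) ts) \<le> 1"
proof -
  let ?S = "rev (sort (map dim ts))"
  have "mset ?S = mset (map dim ts)" by simp
  then have "length (filter ((=) k) ?S) = length (filter ((=) k) (map dim ts))"
    by (metis mset_filter size_mset)
  moreover have "sorted_wrt (\<ge>) ?S"
    by (simp add: sorted_wrt_rev)
  ultimately show ?thesis
    using sorted_desc_dim_rule_le_iff[of ?S k]
    by (simp add: filter_map comp_def eq_commute)
qed

fun top_part :: "nat \<Rightarrow> tree \<Rightarrow> tree" where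
  "top_part m (Node cs) =
     (if dim (Node cs) \<le> m then Node [] else Node (map (top_part m) cs))"

fun bottom_parts :: "nat \<Rightarrow> tree \<Rightarrow> tree list" where
  "bottom_parts m (Node cs) =
     (if dim (Node cs) \<le> m then [Node cs] else concat (map (bottom_parts m) cs))"

declare top_part.simps [simp del] bottom_parts.simps [simp del]

lemma graft_top_part_bottom_parts:
  "graft (top_part m t) (bottom_parts m t @ rest) = (t, rest)"
proof (induction m t arbitrary: rest rule: top_part.induct)
  case (1 m cs)
  show ?case
  proof (cases "dim (Node cs) \<le> m")
    case True
    then show ?thesis by (simp add: top_part.simps bottom_parts.simps)
  next
    case False
    then obtain c cs' where cs: "cs = c # cs'"
      by (cases cs) auto
    have "graft_list (map (top_part m) ds) (concat (map (bottom_parts m) ds) @ rest)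
            = (ds, rest)" if "set ds \<subseteq> set cs" for ds rest
      using that by (induction ds arbitrary: rest) (auto simp: 1[OF False])
    from this[of cs rest] show ?thesis
      using False cs by (simp add: top_part.simps bottom_parts.simps)
  qed
qed

lemma length_bottom_parts: "length (bottom_parts m t) = nleaves (top_part m t)"
proof (induction m t rule: top_part.induct)
  case (1 m cs)
  show ?case
  proof (cases "dim (Node cs) \<le> m")
    case True
    then show ?thesis by (simp add: top_part.simps bottom_parts.simps)
  next
    case False
    then obtain c cs' where cs: "cs = c # cs'"
      by (cases cs) auto
    have "length (bottom_parts m (Node cs)) = sum_list (map (length \<circ> bottom_parts m) cs)"
      using False by (simp add: bottom_parts.simps length_concat)
    also have "\<dots> = sum_list (map (nleaves \<circ> top_part m) cs)"
      using 1[OF False] by (simp cong: map_cong)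
    also have "\<dots> = nleaves (top_part m (Node cs))"
      using False cs by (simp add: top_part.simps)
    finally show ?thesis .
  qed
qed

lemma dim_bottom_parts_le: "s \<in> set (bottom_parts m t) \<Longrightarrow> dim s \<le> m"
  by (induction m t rule: top_part.induct) (auto simp: bottom_parts.simps split: if_splits)

lemma dim_top_part_le: "dim (top_part m t) \<le> dim t - m"
proof (induction m t rule: top_part.induct)
  case (1 m cs)
  let ?d = "dim (Node cs)"
  show ?case
  proof (cases "?d \<le> m")
    case True
    then show ?thesis by (simp add: top_part.simps)
  next
    case False
    have children_le: "\<forall>c\<in>set cs. dim c \<le> ?d"
      and at_most_one_eq: "length (filter (\<lambda>c. dim c = ?d) cs) \<le> 1"
      using dim_Node_le_iff[of cs ?d] by auto
    have IH: "dim (top_part m c) \<le> dim c - m" if "c \<in> set cs" for c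
      using 1 False that by blast
    have tops_le: "\<forall>c\<in>set cs. dim (top_part m c) \<le> ?d - m"
      using IH children_le by (meson diff_le_mono order_trans)
    text \<open>A child can only reach \<open>?d - m\<close> after cutting if it had dimension \<open>?d\<close> before.\<close>
    have "filter (\<lambda>c. dim (top_part m c) = ?d - m) cs
            = filter (\<lambda>c. dim (top_part m c) = ?d - m) (filter (\<lambda>c. dim c = ?d) cs)"
      unfolding filter_filter
    proof (rule filter_cong)
      fix c assume "c \<in> set cs"
      with IH children_le False
      show "(dim (top_part m c) = ?d - m) = (dim c = ?d \<and> dim (top_part m c) = ?d - m)"
        by fastforce
    qed simp
    then have "length (filter (\<lambda>c. dim (top_part m c) = ?d - m) cs) \<le> 1"
      by (metis at_most_one_eq length_filter_le order_trans)
    then have "dim (Node (map (top_part m) cs)) \<le> ?d - m"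
      using tops_le dim_Node_le_iff[of "map (top_part m) cs" "?d - m"]
      by (simp add: filter_map comp_def)
    then show ?thesis
      using False by (simp add: top_part.simps)
  qed
qed

theorem lemma5:
  fixes m :: nat and t :: tree
  assumes "dim t = 2 * m"
  shows "\<exists>t' ts. length ts = nleaves t' \<and> dim t' \<le> m \<and> (\<forall>s\<in>set ts. dim s \<le> m)
                 \<and> t = subst t' ts"
proof (intro exI conjI ballI)
  show "length (bottom_parts m t) = nleaves (top_part m t)"
    by (rule length_bottom_parts)
  show "dim (top_part m t) \<le> m"
    using dim_top_part_le[of m t] assms by simp
  show "dim s \<le> m" if "s \<in> set (bottom_parts m t)" for s
    using that by (rule dim_bottom_parts_le)
  show "t = subst (top_part m t) (bottom_parts m t)"
    using graft_top_part_bottom_parts[of m t "[]"] by (simp add: subst_def)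
qed

end
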